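(* Let $d\ge 1$ and $n,k\ge 0$ be integers. Let $\mathcal{L}_{r\leq d}(n,k)$ (resp. $\mathcal{L}_{c\leq d}(n,k)$) be the set of lonesum $0$-$1$ matrices with $n$ rows and $k$ columns, with no all-zero row and no all-zero column, such that at most $d$ rows (resp. at most $d$ columns) are of the same type, with no restriction on the number of columns (resp. rows) of the same type. Then \begin{align*} |\mathcal{L}_{r\leq d}(n,k)|&=\sum_{m=0}^{\min(n,k)} m!\,S_{\leq d}(n,m)\; m!\,S(k,m),\\ |\mathcal{L}_{c\leq d}(n,k)|&=\sum_{m=0}^{\min(n,k)} m!\,S(n,m)\; m!\,S_{\leq d}(k,m). \end{align*}
   Context: A $0$-$1$ matrix is lonesum if it is uniquely determined by its row sum vector and column sum vector; equivalently, it contains no $2\times 2$ submatrix equal to $\begin{pmatrix}1&0\\0&1\end{pmatrix}$ or $\begin{pmatrix}0&1\\1&0\end{pmatrix}$. Two rows (resp. columns) are of the same type iff they are identical vectors. $S(n,m)$ is the Stirling number of the second kind (number of partitions of an $n$-set into $m$ non-empty blocks), and $S_{\leq d}(n,m)$ is the number of such partitions in which every block has at most $d$ elements (with $S(0,0)=S_{\le d}(0,0)=1$). *)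

theory Defs
  imports Main "HOL-Combinatorics.Stirling" "HOL-Library.Disjoint_Sets"
begin

definition zo_matrices :: "nat \<Rightarrow> nat \<Rightarrow> (nat \<Rightarrow> nat \<Rightarrow> bool) set" where
  "zo_matrices n k = {A. \<forall>i j. (n \<le> i \<or> k \<le> j) \<longrightarrow> \<not> A i j}"

definition row_sum :: "nat \<Rightarrow> (nat \<Rightarrow> nat \<Rightarrow> bool) \<Rightarrow> nat \<Rightarrow> nat" where
  "row_sum k A i = card {j. j < k \<and> A i j}"

definition col_sum :: "nat \<Rightarrow> (nat \<Rightarrow> nat \<Rightarrow> bool) \<Rightarrow> nat \<Rightarrow> nat" where
  "col_sum n A j = card {i. i < n \<and> A i j}"

definition lonesum :: "nat \<Rightarrow> nat \<Rightarrow> (nat \<Rightarrow> nat \<Rightarrow> bool) \<Rightarrow> bool" where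
  "lonesum n k A \<longleftrightarrow> A \<in> zo_matrices n k \<and>
     (\<forall>B \<in> zo_matrices n k.
        (\<forall>i<n. row_sum k B i = row_sum k A i) \<and> (\<forall>j<k. col_sum n B j = col_sum n A j)
        \<longrightarrow> B = A)"

definition no_zero_row :: "nat \<Rightarrow> nat \<Rightarrow> (nat \<Rightarrow> nat \<Rightarrow> bool) \<Rightarrow> bool" where
  "no_zero_row n k A \<longleftrightarrow> (\<forall>i<n. \<exists>j<k. A i j)"

definition no_zero_col :: "nat \<Rightarrow> nat \<Rightarrow> (nat \<Rightarrow> nat \<Rightarrow> bool) \<Rightarrow> bool" where
  "no_zero_col n k A \<longleftrightarrow> (\<forall>j<k. \<exists>i<n. A i j)"

definition same_row_type :: "nat \<Rightarrow> (nat \<Rightarrow> nat \<Rightarrow> bool) \<Rightarrow> nat \<Rightarrow> nat \<Rightarrow> bool" where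
  "same_row_type k A i i' \<longleftrightarrow> (\<forall>j<k. A i j = A i' j)"

definition same_col_type :: "nat \<Rightarrow> (nat \<Rightarrow> nat \<Rightarrow> bool) \<Rightarrow> nat \<Rightarrow> nat \<Rightarrow> bool" where
  "same_col_type n A j j' \<longleftrightarrow> (\<forall>i<n. A i j = A i j')"

definition rows_le :: "nat \<Rightarrow> nat \<Rightarrow> nat \<Rightarrow> (nat \<Rightarrow> nat \<Rightarrow> bool) \<Rightarrow> bool" where
  "rows_le d n k A \<longleftrightarrow> (\<forall>i<n. card {i'. i' < n \<and> same_row_type k A i i'} \<le> d)"

definition cols_le :: "nat \<Rightarrow> nat \<Rightarrow> nat \<Rightarrow> (nat \<Rightarrow> nat \<Rightarrow> bool) \<Rightarrow> bool" where
  "cols_le d n k A \<longleftrightarrow> (\<forall>j<k. card {j'. j' < k \<and> same_col_type n A j j'} \<le> d)"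

definition L_row_le :: "nat \<Rightarrow> nat \<Rightarrow> nat \<Rightarrow> (nat \<Rightarrow> nat \<Rightarrow> bool) set" where
  "L_row_le d n k = {A. lonesum n k A \<and> no_zero_row n k A \<and> no_zero_col n k A \<and> rows_le d n k A}"

definition L_col_le :: "nat \<Rightarrow> nat \<Rightarrow> nat \<Rightarrow> (nat \<Rightarrow> nat \<Rightarrow> bool) set" where
  "L_col_le d n k = {A. lonesum n k A \<and> no_zero_row n k A \<and> no_zero_col n k A \<and> cols_le d n k A}"

definition Stirling_le :: "nat \<Rightarrow> nat \<Rightarrow> nat \<Rightarrow> nat" where
  "Stirling_le d n m = card {P. partition_on {..<n} P \<and> card P = m \<and> (\<forall>B\<in>P. card B \<le> d)}"

end

theory Submission
  imports Defs "HOL-Library.FuncSet"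
begin

text \<open>A 0-1 matrix is lonesum iff it contains no switch, i.e. iff the supports of its rows form
  a chain under inclusion. Ranking the rows within this chain and recording for each column the
  rank at which it enters the chain turns a lonesum matrix without zero rows or columns into a
  staircase \<open>A i j \<longleftrightarrow> g j \<le> f i\<close> for surjections \<open>f : [n] \<rightarrow> [m]\<close> and \<open>g : [k] \<rightarrow> [m]\<close>,
  and conversely every such pair gives a distinct staircase of this kind. Rows of the same type
  are exactly the fibres of \<open>f\<close>, so bounding their number bounds the fibres of \<open>f\<close> by \<open>d\<close>;
  surjections onto an \<open>m\<close>-set with fibres of size at most \<open>d\<close> number \<open>m! S\<^sub>\<le>\<^sub>d(n, m)\<close>.
  The statement for columns follows by transposition.\<close>


section \<open>Surjections with bounded fibres\<close>

definition surjections :: "'a set \<Rightarrow> 'b set \<Rightarrow> ('a \<Rightarrow> 'b) set" where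
  "surjections A B = {f \<in> A \<rightarrow>\<^sub>E B. f ` A = B}"

lemma finite_surjections: "finite A \<Longrightarrow> finite B \<Longrightarrow> finite (surjections A B)"
  unfolding surjections_def by (rule finite_subset[of _ "A \<rightarrow>\<^sub>E B"]) (auto intro: finite_PiE)

text \<open>Forgetting the value at a new point either keeps a surjection surjective or loses
  exactly that value; this is the recurrence of the Stirling numbers.\<close>
lemma surjections_insert:
  assumes "a \<notin> A"
  shows "surjections (insert a A) B =
    (\<Union>c\<in>B. (\<lambda>g. g(a := c)) ` (surjections A B \<union> surjections A (B - {c})))"
proof (intro equalityI subsetI)
  fix f assume f: "f \<in> surjections (insert a A) B"
  define g where "g = f(a := undefined)"
  have "g \<in> A \<rightarrow>\<^sub>E B" and "f a \<in> B" and "insert (f a) (g ` A) = B"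
    using f assms by (auto simp: surjections_def g_def PiE_def extensional_def)
  then have "g \<in> surjections A B \<union> surjections A (B - {f a})"
    by (cases "f a \<in> g ` A") (auto simp: surjections_def PiE_def Pi_def insert_absorb image_iff)
  moreover have "f = g(a := f a)" by (simp add: g_def)
  ultimately show "f \<in> (\<Union>c\<in>B. (\<lambda>g. g(a := c)) ` (surjections A B \<union> surjections A (B - {c})))"
    using \<open>f a \<in> B\<close> by blast
next
  fix f assume "f \<in> (\<Union>c\<in>B. (\<lambda>g. g(a := c)) ` (surjections A B \<union> surjections A (B - {c})))"
  then obtain c g where c: "c \<in> B" and g: "g \<in> surjections A B \<union> surjections A (B - {c})"
    and f: "f = g(a := c)" by blast
  have "f ` insert a A = insert c (g ` A)" using assms f by auto
  then show "f \<in> surjections (insert a A) B"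
    using g c f by (auto simp: surjections_def PiE_def Pi_def extensional_def)
qed

lemma card_surjections:
  assumes "finite A" "finite B"
  shows "card (surjections A B) = fact (card B) * Stirling (card A) (card B)"
  using assms
proof (induction A arbitrary: B rule: finite_induct)
  case empty
  then show ?case
    by (cases "card B") (auto simp: surjections_def PiE_empty_domain)
next
  case (insert a A)
  let ?S = "\<lambda>c. surjections A B \<union> surjections A (B - {c})"
  have inj: "inj_on (\<lambda>g. g(a := c)) (?S c)" for c
  proof (rule inj_onI)
    fix g h assume "g \<in> ?S c" "h \<in> ?S c" "g(a := c) = h(a := c)"
    moreover have "g a = h a"
      using \<open>g \<in> ?S c\<close> \<open>h \<in> ?S c\<close> insert.hyps(2)
      by (auto simp: surjections_def PiE_def extensional_def)
    ultimately show "g = h" by (metis fun_upd_triv fun_upd_upd)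
  qed
  have "card (surjections (insert a A) B) = (\<Sum>c\<in>B. card ((\<lambda>g. g(a := c)) ` ?S c))"
    unfolding surjections_insert[OF insert.hyps(2)]
    by (rule card_UN_disjoint)
      (use insert.prems in \<open>auto intro: finite_surjections insert.hyps dest: fun_cong[where x=a]\<close>)
  also have "\<dots> = (\<Sum>c\<in>B. card (surjections A B) + card (surjections A (B - {c})))"
  proof (rule sum.cong[OF refl])
    fix c assume "c \<in> B"
    then have "surjections A B \<inter> surjections A (B - {c}) = {}"
      by (auto simp: surjections_def)
    then show "card ((\<lambda>g. g(a := c)) ` ?S c) = card (surjections A B) + card (surjections A (B - {c}))"
      by (simp add: card_image[OF inj] card_Un_disjoint finite_surjections insert)
  qed
  also have "\<dots> = card B * (fact (card B) * Stirling (card A) (card B) +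
      fact (card B - 1) * Stirling (card A) (card B - 1))"
    using insert by (simp add: card_Diff_singleton)
  also have "\<dots> = fact (card B) * Stirling (card (insert a A)) (card B)"
    using insert by (cases "card B") (simp_all add: algebra_simps)
  finally show ?case .
qed

lemma card_inj_on_funcset_same_card:
  assumes "finite A" "finite B" "card A = card B"
  shows "card {f \<in> A \<rightarrow>\<^sub>E B. inj_on f A} = fact (card B)"
  using card_inj_on_subset_funcset[OF assms(1,2) order_refl] assms(3)
  by (simp add: fact_prod_rev)

definition fibres :: "'a set \<Rightarrow> 'b set \<Rightarrow> ('a \<Rightarrow> 'b) \<Rightarrow> 'a set set" where
  "fibres A B f = (\<lambda>b. {a \<in> A. f a = b}) ` B"

definition bounded_surjections :: "nat \<Rightarrow> 'a set \<Rightarrow> 'b set \<Rightarrow> ('a \<Rightarrow> 'b) set" where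
  "bounded_surjections d A B = {f \<in> surjections A B. \<forall>X \<in> fibres A B f. card X \<le> d}"

definition bounded_partitions :: "nat \<Rightarrow> 'a set \<Rightarrow> nat \<Rightarrow> 'a set set set" where
  "bounded_partitions d A m = {P. partition_on A P \<and> card P = m \<and> (\<forall>X\<in>P. card X \<le> d)}"

lemma partition_on_fibres:
  assumes "f \<in> surjections A B"
  shows "partition_on A (fibres A B f)"
  using assms by (intro partition_onI) (auto simp: fibres_def surjections_def disjnt_def)

lemma card_fibres:
  assumes "f \<in> surjections A B"
  shows "card (fibres A B f) = card B"
  unfolding fibres_def
proof (rule card_image, rule inj_onI)
  fix b b' assume "b \<in> B" "{a \<in> A. f a = b} = {a \<in> A. f a = b'}"
  moreover obtain a where "a \<in> A" "f a = b" using \<open>b \<in> B\<close> assms by (auto simp: surjections_def)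
  ultimately show "b = b'" by blast
qed

definition block_of :: "'a set set \<Rightarrow> 'a \<Rightarrow> 'a set" where
  "block_of P a = (THE X. X \<in> P \<and> a \<in> X)"

lemma block_of_eq:
  assumes "partition_on A P" "X \<in> P" "a \<in> X"
  shows "block_of P a = X"
  unfolding block_of_def
proof (rule the_equality)
  fix Y assume "Y \<in> P \<and> a \<in> Y"
  then show "Y = X" using assms partition_onD2[OF assms(1)] by (auto simp: disjnt_def pairwise_def)
qed (use assms in simp)

lemma block_of_mem:
  assumes "partition_on A P" "a \<in> A"
  shows "block_of P a \<in> P" "a \<in> block_of P a"
proof -
  obtain X where "X \<in> P" "a \<in> X" using assms partition_onD1[OF assms(1)] by auto
  then show "block_of P a \<in> P" "a \<in> block_of P a" using block_of_eq[OF assms(1)] by simp_all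
qed

lemma some_in_block:
  assumes "partition_on A P" "X \<in> P"
  shows "(SOME a. a \<in> X) \<in> X"
  using assms partition_onD3[OF assms(1)] by (metis ex_in_conv someI)

lemma surjection_of_block_labelling:
  assumes P: "partition_on A P" and h: "h \<in> P \<rightarrow>\<^sub>E B" "inj_on h P" "h ` P = B"
  shows "(\<lambda>a\<in>A. h (block_of P a)) \<in> surjections A B" (is "?f \<in> _")
    and "fibres A B (\<lambda>a\<in>A. h (block_of P a)) = P"
proof -
  have fibre: "{a \<in> A. ?f a = h X} = X" if X: "X \<in> P" for X
  proof (intro equalityI subsetI)
    fix a assume "a \<in> {a \<in> A. ?f a = h X}"
    then have a: "a \<in> A" "h (block_of P a) = h X" by auto
    then have "block_of P a = X" using inj_onD[OF h(2)] block_of_mem(1)[OF P] X by blast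
    then show "a \<in> X" using block_of_mem(2)[OF P a(1)] by simp
  qed (use X partition_onD1[OF P] block_of_eq[OF P] in auto)
  have "?f ` A = B"
  proof
    show "?f ` A \<subseteq> B" using h(1) block_of_mem(1)[OF P] by auto
    show "B \<subseteq> ?f ` A"
    proof
      fix b assume "b \<in> B"
      then obtain X where X: "X \<in> P" "b = h X" using h(3) by auto
      then have "(SOME a. a \<in> X) \<in> {a \<in> A. ?f a = b}"
        using fibre some_in_block[OF P] by simp
      then show "b \<in> ?f ` A" by blast
    qed
  qed
  then show "?f \<in> surjections A B" by (auto simp: surjections_def)
  show "fibres A B ?f = P"
    unfolding fibres_def h(3)[symmetric] image_image using fibre by simp
qed

lemma block_labelling_of_surjection:
  assumes f: "f \<in> surjections A B" and P: "fibres A B f = P"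
  shows "(\<lambda>X\<in>P. f (SOME a. a \<in> X)) \<in> P \<rightarrow>\<^sub>E B" (is "?h \<in> _")
    and "inj_on (\<lambda>X\<in>P. f (SOME a. a \<in> X)) P"
    and "(\<lambda>a\<in>A. (\<lambda>X\<in>P. f (SOME a. a \<in> X)) (block_of P a)) = f"
proof -
  have partition: "partition_on A P" using partition_on_fibres[OF f] P by simp
  have label: "?h X = b" if "X = {a \<in> A. f a = b}" "X \<in> P" for X b
    using that some_in_block[OF partition] by fastforce
  show "?h \<in> P \<rightarrow>\<^sub>E B" using P label by (auto simp: fibres_def)
  show "inj_on ?h P" using P label by (intro inj_onI) (auto simp: fibres_def)
  show "(\<lambda>a\<in>A. ?h (block_of P a)) = f"
  proof
    fix a show "(\<lambda>a\<in>A. ?h (block_of P a)) a = f a"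
    proof (cases "a \<in> A")
      case True
      then obtain b where "block_of P a = {x \<in> A. f x = b}"
        using block_of_mem(1)[OF partition] P by (auto simp: fibres_def)
      with block_of_mem[OF partition True] label show ?thesis by simp
    qed (use f in \<open>auto simp: surjections_def PiE_def extensional_def\<close>)
  qed
qed

text \<open>A surjection with prescribed fibres is the same as a labelling of the blocks by
  the elements of the codomain.\<close>
lemma card_surjections_with_fibres:
  assumes A: "finite A" and B: "finite B" and P: "partition_on A P" and cP: "card P = card B"
  shows "card {f \<in> surjections A B. fibres A B f = P} = fact (card B)"
proof -
  let ?H = "{h \<in> P \<rightarrow>\<^sub>E B. inj_on h P}"
  let ?S = "{f \<in> surjections A B. fibres A B f = P}"
  have finP: "finite P" using finite_elements[OF A P] .
  have "bij_betw (\<lambda>h. \<lambda>a\<in>A. h (block_of P a)) ?H ?S"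
  proof (rule bij_betw_byWitness[where f' = "\<lambda>f. \<lambda>X\<in>P. f (SOME a. a \<in> X)"])
    show "\<forall>h\<in>?H. (\<lambda>X\<in>P. (\<lambda>a\<in>A. h (block_of P a)) (SOME a. a \<in> X)) = h"
    proof safe
      fix h assume h: "h \<in> P \<rightarrow>\<^sub>E B"
      have "(SOME a. a \<in> X) \<in> A" "block_of P (SOME a. a \<in> X) = X" if "X \<in> P" for X
        using that some_in_block[OF P] partition_onD1[OF P] block_of_eq[OF P] by auto
      with h show "(\<lambda>X\<in>P. (\<lambda>a\<in>A. h (block_of P a)) (SOME a. a \<in> X)) = h"
        by (auto simp: PiE_def extensional_def fun_eq_iff)
    qed
    show "(\<lambda>h. \<lambda>a\<in>A. h (block_of P a)) ` ?H \<subseteq> ?S"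
    proof
      fix f assume "f \<in> (\<lambda>h. \<lambda>a\<in>A. h (block_of P a)) ` ?H"
      then obtain h where h: "h \<in> P \<rightarrow>\<^sub>E B" "inj_on h P" and f: "f = (\<lambda>a\<in>A. h (block_of P a))"
        by blast
      have "h ` P = B" using h card_image[OF h(2)] cP by (intro card_subset_eq B) auto
      with f show "f \<in> ?S" using surjection_of_block_labelling[OF P h] by simp
    qed
    show "\<forall>f\<in>?S. (\<lambda>a\<in>A. (\<lambda>X\<in>P. f (SOME a. a \<in> X)) (block_of P a)) = f"
      using block_labelling_of_surjection(3) by blast
    show "(\<lambda>f. \<lambda>X\<in>P. f (SOME a. a \<in> X)) ` ?S \<subseteq> ?H"
      using block_labelling_of_surjection(1,2) by blast
  qed
  then have "card ?H = card ?S" by (rule bij_betw_same_card)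
  with card_inj_on_funcset_same_card[OF finP B cP] show ?thesis by simp
qed

lemma card_bounded_surjections:
  assumes A: "finite A" and B: "finite B"
  shows "card (bounded_surjections d A B) = fact (card B) * card (bounded_partitions d A (card B))"
proof -
  let ?S = "\<lambda>P. {f \<in> surjections A B. fibres A B f = P}"
  have "bounded_surjections d A B = (\<Union>P\<in>bounded_partitions d A (card B). ?S P)"
    by (auto simp: bounded_surjections_def bounded_partitions_def partition_on_fibres card_fibres)
  moreover have "finite (bounded_partitions d A (card B))"
    by (rule finite_subset[OF _ finitely_many_partition_on[OF A]])
      (auto simp: bounded_partitions_def)
  ultimately have "card (bounded_surjections d A B) = (\<Sum>P\<in>bounded_partitions d A (card B). card (?S P))"
    using finite_surjections[OF A B] by (auto intro!: card_UN_disjoint)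
  also have "\<dots> = (\<Sum>P\<in>bounded_partitions d A (card B). fact (card B))"
    by (intro sum.cong refl card_surjections_with_fibres A B) (auto simp: bounded_partitions_def)
  finally show ?thesis by simp
qed


section \<open>Lonesum matrices and switches\<close>

definition switch_free :: "nat \<Rightarrow> nat \<Rightarrow> (nat \<Rightarrow> nat \<Rightarrow> bool) \<Rightarrow> bool" where
  "switch_free n k A \<longleftrightarrow> (\<forall>i<n. \<forall>i'<n. \<forall>j<k. \<forall>j'<k. A i j \<and> A i' j' \<longrightarrow> A i j' \<or> A i' j)"

text \<open>A row of maximal sum contains the support of every other row, so any B with the same
  margins agrees with A on that row; delete it and repeat.\<close>
lemma switch_free_determined_by_sums:
  fixes A B :: "nat \<Rightarrow> nat \<Rightarrow> bool"
  assumes "finite I"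
    and "\<forall>i\<in>I. \<forall>i'\<in>I. \<forall>j<k. \<forall>j'<k. A i j \<and> A i' j' \<longrightarrow> A i j' \<or> A i' j"
    and "\<forall>i\<in>I. card {j. j < k \<and> B i j} = card {j. j < k \<and> A i j}"
    and "\<forall>j<k. card {i\<in>I. B i j} = card {i\<in>I. A i j}"
  shows "\<forall>i\<in>I. \<forall>j<k. B i j = A i j"
  using assms
proof (induction I rule: finite_psubset_induct)
  case (psubset I)
  note switch_free = psubset.prems(1) and rows = psubset.prems(2) and cols = psubset.prems(3)
  show ?case
  proof (cases "I = {}")
    case False
    let ?row = "\<lambda>i. {j. j < k \<and> A i j}"
    have "Max ((\<lambda>i. card (?row i)) ` I) \<in> (\<lambda>i. card (?row i)) ` I"
      using psubset.hyps(1) False by simp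
    then obtain i0 where i0: "i0 \<in> I" and "card (?row i0) = Max ((\<lambda>i. card (?row i)) ` I)"
      by auto
    then have max: "\<forall>i\<in>I. card (?row i) \<le> card (?row i0)" using psubset.hyps(1) by simp
    have covers: "A i0 j" if "i \<in> I" "j < k" "A i j" for i j
    proof (rule ccontr)
      assume "\<not> A i0 j"
      then have "?row i0 \<subset> ?row i" using switch_free that i0 by blast
      then have "card (?row i0) < card (?row i)" by (rule psubset_card_mono[rotated]) simp
      with max that(1) show False by fastforce
    qed
    have "A i0 j" if "j < k" "B i0 j" for j
    proof -
      have "card {i\<in>I. B i j} \<noteq> 0" using that i0 psubset.hyps(1) by auto
      then have "{i\<in>I. A i j} \<noteq> {}" using cols that by force
      then obtain i where "i \<in> I" "A i j" by blast
      with covers that show ?thesis by blast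
    qed
    then have "{j. j < k \<and> B i0 j} = ?row i0"
      using rows i0 by (intro card_subset_eq) auto
    then have row_i0: "B i0 j = A i0 j" if "j < k" for j using that by blast
    have "\<forall>i\<in>I - {i0}. \<forall>j<k. B i j = A i j"
    proof (rule psubset.IH)
      show "I - {i0} \<subset> I" using i0 by blast
      show "\<forall>j<k. card {i \<in> I - {i0}. B i j} = card {i \<in> I - {i0}. A i j}"
      proof (intro allI impI)
        fix j assume "j < k"
        have "{i \<in> I - {i0}. P i} = {i\<in>I. P i} - {i0}" for P by blast
        then show "card {i \<in> I - {i0}. B i j} = card {i \<in> I - {i0}. A i j}"
          using cols \<open>j < k\<close> row_i0[OF \<open>j < k\<close>] i0 psubset.hyps(1)
          by (simp add: card_Diff_singleton_if)
      qed
    qed (use switch_free rows in \<open>simp_all\<close>)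
    with row_i0 show ?thesis by blast
  qed simp
qed

definition switch :: "(nat \<Rightarrow> nat \<Rightarrow> bool) \<Rightarrow> nat \<Rightarrow> nat \<Rightarrow> nat \<Rightarrow> nat \<Rightarrow> nat \<Rightarrow> nat \<Rightarrow> bool" where
  "switch A i i' j j' x y =
    (if x = i \<and> y = j \<or> x = i' \<and> y = j' then False
     else if x = i \<and> y = j' \<or> x = i' \<and> y = j then True else A x y)"

lemma switch_transpose: "switch A i i' j j' x y = switch (\<lambda>a b. A b a) j j' i i' y x"
  unfolding switch_def by (simp add: conj_commute)

lemma card_insert_Diff_swap:
  assumes "finite S" "a \<in> S" "b \<notin> S"
  shows "card (insert b (S - {a})) = card S"
  using assms by (simp add: card_Diff_singleton) (metis Suc_pred card_gt_0_iff emptyE)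

lemma card_row_switch:
  assumes "j < k" "j' < k" "A i j" "A i' j'" "\<not> A i j'" "\<not> A i' j"
  shows "card {y. y < k \<and> switch A i i' j j' x y} = card {y. y < k \<and> A x y}"
proof -
  let ?R = "{y. y < k \<and> A x y}"
  have "i \<noteq> i'" "j \<noteq> j'" using assms by auto
  consider "x = i" | "x = i'" | "x \<noteq> i" "x \<noteq> i'" by blast
  then show ?thesis
  proof cases
    case 1
    then have "{y. y < k \<and> switch A i i' j j' x y} = insert j' (?R - {j})"
      using assms \<open>i \<noteq> i'\<close> \<open>j \<noteq> j'\<close> by (auto simp: switch_def)
    moreover have "card (insert j' (?R - {j})) = card ?R"
      by (rule card_insert_Diff_swap) (use assms 1 in auto)
    ultimately show ?thesis by simp
  next
    case 2
    then have "{y. y < k \<and> switch A i i' j j' x y} = insert j (?R - {j'})"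
      using assms \<open>i \<noteq> i'\<close> \<open>j \<noteq> j'\<close> by (auto simp: switch_def)
    moreover have "card (insert j (?R - {j'})) = card ?R"
      by (rule card_insert_Diff_swap) (use assms 2 in auto)
    ultimately show ?thesis by simp
  next
    case 3
    then show ?thesis by (simp add: switch_def)
  qed
qed

lemma lonesum_if_switch_free:
  assumes A: "A \<in> zo_matrices n k" and switch_free: "switch_free n k A"
  shows "lonesum n k A"
proof -
  have "B = A" if B: "B \<in> zo_matrices n k" and rows: "\<forall>i<n. row_sum k B i = row_sum k A i"
    and cols: "\<forall>j<k. col_sum n B j = col_sum n A j" for B
  proof -
    have "{i \<in> {..<n}. P i} = {i. i < n \<and> P i}" for P by auto
    then have "\<forall>i\<in>{..<n}. \<forall>j<k. B i j = A i j"
      using switch_free rows cols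
      by (intro switch_free_determined_by_sums) (simp_all add: switch_free_def row_sum_def col_sum_def)
    show "B = A"
    proof (intro ext)
      fix x y show "B x y = A x y"
        using A B \<open>\<forall>i\<in>{..<n}. \<forall>j<k. B i j = A i j\<close>
        by (cases "x < n \<and> y < k") (auto simp: zo_matrices_def)
    qed
  qed
  with A show "lonesum n k A" by (simp add: lonesum_def)
qed

lemma switch_free_if_lonesum:
  assumes A: "A \<in> zo_matrices n k" and lonesum: "lonesum n k A"
  shows "switch_free n k A"
  unfolding switch_free_def
proof (rule ccontr)
  assume "\<not> (\<forall>i<n. \<forall>i'<n. \<forall>j<k. \<forall>j'<k. A i j \<and> A i' j' \<longrightarrow> A i j' \<or> A i' j)"
  then obtain i i' j j' where idx: "i < n" "i' < n" "j < k" "j' < k"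
    and a: "A i j" "A i' j'" "\<not> A i j'" "\<not> A i' j" by blast
  let ?B = "switch A i i' j j'"
  have "?B \<in> zo_matrices n k" using A idx by (auto simp: zo_matrices_def switch_def)
  moreover have "row_sum k ?B x = row_sum k A x" for x
    using idx a by (simp add: row_sum_def card_row_switch)
  moreover have "col_sum n ?B y = col_sum n A y" for y
    using idx a card_row_switch[of i n i' "\<lambda>a b. A b a" j j' y]
    unfolding col_sum_def switch_transpose[of A i i' j j' _ y] by simp
  ultimately have "?B = A" using lonesum by (simp add: lonesum_def)
  then have "?B i j = A i j" by simp
  then show False using a by (simp add: switch_def)
qed

lemma lonesum_iff_switch_free:
  "A \<in> zo_matrices n k \<Longrightarrow> lonesum n k A \<longleftrightarrow> switch_free n k A"
  using lonesum_if_switch_free switch_free_if_lonesum by blast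


section \<open>Ranks in a finite chain of sets\<close>

definition chain_rank :: "'a set set \<Rightarrow> 'a set \<Rightarrow> nat" where
  "chain_rank C X = card {Y \<in> C. Y \<subset> X}"

text \<open>In a finite chain, \<open>chain_entry C j\<close> is the rank of the smallest member containing \<open>j\<close>.\<close>
definition chain_entry :: "'a set set \<Rightarrow> 'a \<Rightarrow> nat" where
  "chain_entry C j = card {Y \<in> C. j \<notin> Y}"

lemma chain_rank_strict_mono:
  assumes "finite C" "X \<in> C" "X \<subset> Y"
  shows "chain_rank C X < chain_rank C Y"
  unfolding chain_rank_def
  by (rule psubset_card_mono) (use assms in auto)

lemma bij_betw_chain_rank:
  assumes "finite C" "chain\<^sub>\<subseteq> C"
  shows "bij_betw (chain_rank C) C {..<card C}"
proof (rule bij_betw_imageI)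
  show "inj_on (chain_rank C) C"
  proof (rule inj_onI)
    fix X Y assume "X \<in> C" "Y \<in> C" "chain_rank C X = chain_rank C Y"
    then show "X = Y"
      using assms chain_rank_strict_mono[OF assms(1)] unfolding chain_subset_def
      by (metis less_irrefl psubsetI)
  qed
  have "chain_rank C X < card C" if "X \<in> C" for X
    unfolding chain_rank_def using that by (intro psubset_card_mono assms(1)) auto
  then have "chain_rank C ` C \<subseteq> {..<card C}" by auto
  moreover have "card (chain_rank C ` C) = card {..<card C}"
    using card_image[OF \<open>inj_on (chain_rank C) C\<close>] by simp
  ultimately show "chain_rank C ` C = {..<card C}"
    by (intro card_subset_eq) auto
qed

lemma mem_iff_chain_entry_le:
  assumes "finite C" "chain\<^sub>\<subseteq> C" "X \<in> C"
  shows "j \<in> X \<longleftrightarrow> chain_entry C j \<le> chain_rank C X"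
proof
  assume "j \<in> X"
  then have "{Y \<in> C. j \<notin> Y} \<subseteq> {Y \<in> C. Y \<subset> X}"
    using assms(2,3) unfolding chain_subset_def by blast
  then show "chain_entry C j \<le> chain_rank C X"
    unfolding chain_entry_def chain_rank_def by (intro card_mono) (simp_all add: assms(1))
next
  assume "chain_entry C j \<le> chain_rank C X"
  moreover have "{Y \<in> C. Y \<subset> X} \<subset> {Y \<in> C. j \<notin> Y}" if "j \<notin> X"
    using that assms(3) by blast
  then have "chain_rank C X < chain_entry C j" if "j \<notin> X"
    using that unfolding chain_entry_def chain_rank_def by (intro psubset_card_mono) (simp_all add: assms(1))
  ultimately show "j \<in> X" by linarith
qed

lemma chain_entry_less_card:
  assumes "finite C" "j \<in> \<Union>C"
  shows "chain_entry C j < card C"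
  unfolding chain_entry_def using assms by (intro psubset_card_mono) auto

lemma chain_entry_surj:
  assumes C: "finite C" "chain\<^sub>\<subseteq> C" and "{} \<notin> C" and "r < card C"
  shows "\<exists>j \<in> \<Union>C. chain_entry C j = r"
proof -
  have rank: "bij_betw (chain_rank C) C {..<card C}" by (rule bij_betw_chain_rank[OF C])
  then obtain X where X: "X \<in> C" "chain_rank C X = r"
    using \<open>r < card C\<close> by (metis bij_betw_imp_surj_on imageE lessThan_iff)
  show ?thesis
  proof (cases r)
    case 0
    then obtain j where "j \<in> X" using X \<open>{} \<notin> C\<close> by (metis ex_in_conv)
    then show ?thesis using X 0 mem_iff_chain_entry_le[OF C X(1)] by auto
  next
    case (Suc r')
    then obtain X' where X': "X' \<in> C" "chain_rank C X' = r'"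
      using rank \<open>r < card C\<close> by (metis bij_betw_imp_surj_on imageE lessThan_iff Suc_lessD)
    have "X' \<subset> X"
      using C(2) X X' Suc chain_rank_strict_mono[OF C(1) X(1)] unfolding chain_subset_def
      by (metis Suc_lessD less_not_refl2 not_less_eq psubsetI)
    then obtain j where "j \<in> X" "j \<notin> X'" by blast
    then have "chain_entry C j \<le> r" "\<not> chain_entry C j \<le> r'"
      using mem_iff_chain_entry_le[OF C] X X' by auto
    then show ?thesis using \<open>j \<in> X\<close> X(1) Suc by (intro bexI[of _ j]) auto
  qed
qed


section \<open>Staircase matrices\<close>

definition staircase :: "nat \<Rightarrow> nat \<Rightarrow> (nat \<Rightarrow> nat) \<Rightarrow> (nat \<Rightarrow> nat) \<Rightarrow> nat \<Rightarrow> nat \<Rightarrow> bool" where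
  "staircase n k f g = (\<lambda>i j. i < n \<and> j < k \<and> g j \<le> f i)"

lemma surjections_lessThanD:
  fixes f :: "nat \<Rightarrow> nat"
  assumes "f \<in> surjections {..<n} {..<m}"
  shows "i < n \<Longrightarrow> f i < m" and "b < m \<Longrightarrow> \<exists>i<n. f i = b" and "m \<le> n"
proof -
  have img: "f ` {..<n} = {..<m}" using assms by (simp add: surjections_def)
  show "i < n \<Longrightarrow> f i < m" using img by auto
  show "b < m \<Longrightarrow> \<exists>i<n. f i = b" using img by (metis imageE lessThan_iff)
  have "card (f ` {..<n}) \<le> card {..<n}" by (rule card_image_le) simp
  then show "m \<le> n" using img by simp
qed

lemma staircase_row_le_iff:
  assumes f: "f \<in> surjections {..<n} {..<m}" and g: "g \<in> surjections {..<k} {..<m}"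
    and "i < n" "i' < n"
  shows "f i \<le> f i' \<longleftrightarrow> (\<forall>j<k. staircase n k f g i j \<longrightarrow> staircase n k f g i' j)"
proof -
  obtain j where "j < k" "g j = f i"
    using surjections_lessThanD[OF g] surjections_lessThanD(1)[OF f \<open>i < n\<close>] by blast
  then show ?thesis using assms(3,4) by (auto simp: staircase_def)
qed

lemma staircase_col_le_iff:
  assumes f: "f \<in> surjections {..<n} {..<m}" and g: "g \<in> surjections {..<k} {..<m}"
    and "j < k" "j' < k"
  shows "g j \<le> g j' \<longleftrightarrow> (\<forall>i<n. staircase n k f g i j' \<longrightarrow> staircase n k f g i j)"
proof -
  obtain i where "i < n" "f i = g j'"
    using surjections_lessThanD[OF f] surjections_lessThanD(1)[OF g \<open>j' < k\<close>] by blast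
  then show ?thesis using assms(3,4) by (auto simp: staircase_def)
qed

text \<open>A surjection onto an initial segment of \<open>\<nat>\<close> is determined by the preorder it
  induces on its domain: \<open>f x\<close> is the number of values below \<open>f x\<close>.\<close>
lemma surjection_lessThan_determined_by_order:
  fixes f f' :: "'a \<Rightarrow> nat"
  assumes f: "f ` A = {..<m}" and f': "f' ` A = {..<m'}"
    and order: "\<forall>x\<in>A. \<forall>y\<in>A. f x \<le> f y \<longleftrightarrow> f' x \<le> f' y"
  shows "x \<in> A \<Longrightarrow> f x = f' x"
proof -
  have "f x = f' x" if "x \<in> A" "f x = v" for x v
    using that
  proof (induction v arbitrary: x rule: less_induct)
    case (less v)
    have below: "{..<h x} = h ` {y \<in> A. h y < h x}" if h: "h ` A = {..<M}" for h :: "'a \<Rightarrow> nat" and M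
    proof (intro equalityI subsetI)
      fix v assume v: "v \<in> {..<h x}"
      have "h x < M" using h less.prems(1) by blast
      with v h obtain y where "y \<in> A" "h y = v" by (metis imageE lessThan_iff order.strict_trans)
      with v show "v \<in> h ` {y \<in> A. h y < h x}" by auto
    qed auto
    have "{y \<in> A. f y < f x} = {y \<in> A. f' y < f' x}"
      using order less.prems(1) by (auto simp: not_le[symmetric])
    moreover have "f ` {y \<in> A. f y < f x} = f' ` {y \<in> A. f y < f x}"
      using less.IH less.prems(2) by (intro image_cong) auto
    ultimately have "{..<f x} = {..<f' x}"
      using below[OF f] below[OF f'] by simp
    then show ?case by (metis lessThan_eq_iff)
  qed
  then show "x \<in> A \<Longrightarrow> f x = f' x" by blast
qed

lemma staircase_inj:
  assumes f: "f \<in> surjections {..<n} {..<m}" and g: "g \<in> surjections {..<k} {..<m}"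
    and f': "f' \<in> surjections {..<n} {..<m'}" and g': "g' \<in> surjections {..<k} {..<m'}"
    and eq: "staircase n k f g = staircase n k f' g'"
  shows "f = f'" and "g = g'"
proof -
  have "\<forall>x\<in>{..<n}. \<forall>y\<in>{..<n}. f x \<le> f y \<longleftrightarrow> f' x \<le> f' y"
    using staircase_row_le_iff[OF f g] staircase_row_le_iff[OF f' g'] eq by simp
  then have "f i = f' i" if "i < n" for i
    using that f f' by (intro surjection_lessThan_determined_by_order) (auto simp: surjections_def)
  with f f' show "f = f'"
    by (intro ext, case_tac "x < n") (auto simp: surjections_def PiE_def extensional_def)
  have "\<forall>x\<in>{..<k}. \<forall>y\<in>{..<k}. g x \<le> g y \<longleftrightarrow> g' x \<le> g' y"
    using staircase_col_le_iff[OF f g] staircase_col_le_iff[OF f' g'] eq by simp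
  then have "g j = g' j" if "j < k" for j
    using that g g' by (intro surjection_lessThan_determined_by_order) (auto simp: surjections_def)
  with g g' show "g = g'"
    by (intro ext, case_tac "x < k") (auto simp: surjections_def PiE_def extensional_def)
qed

lemma lonesum_staircase: "lonesum n k (staircase n k f g)"
proof -
  have "staircase n k f g \<in> zo_matrices n k" by (simp add: zo_matrices_def staircase_def)
  moreover have "switch_free n k (staircase n k f g)"
    by (auto simp: switch_free_def staircase_def)
  ultimately show ?thesis by (simp add: lonesum_iff_switch_free)
qed

lemma no_zero_row_staircase:
  assumes f: "f \<in> surjections {..<n} {..<m}" and g: "g \<in> surjections {..<k} {..<m}"
  shows "no_zero_row n k (staircase n k f g)"
  unfolding no_zero_row_def
proof (intro allI impI)
  fix i assume "i < n"
  then obtain j where "j < k" "g j = 0"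
    using surjections_lessThanD[OF f] surjections_lessThanD(2)[OF g] by (metis gr_zeroI not_less0)
  with \<open>i < n\<close> show "\<exists>j<k. staircase n k f g i j" by (auto simp: staircase_def)
qed

lemma no_zero_col_staircase:
  assumes f: "f \<in> surjections {..<n} {..<m}" and g: "g \<in> surjections {..<k} {..<m}"
  shows "no_zero_col n k (staircase n k f g)"
  unfolding no_zero_col_def
proof (intro allI impI)
  fix j assume "j < k"
  then have "g j < m" by (rule surjections_lessThanD(1)[OF g])
  moreover obtain i where "i < n" "f i = m - 1"
    using surjections_lessThanD(2)[OF f, of "m - 1"] \<open>g j < m\<close> by auto
  ultimately show "\<exists>i<n. staircase n k f g i j" using \<open>j < k\<close> by (auto simp: staircase_def)
qed

lemma same_row_type_staircase_iff:
  assumes f: "f \<in> surjections {..<n} {..<m}" and g: "g \<in> surjections {..<k} {..<m}"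
    and "i < n" "i' < n"
  shows "same_row_type k (staircase n k f g) i i' \<longleftrightarrow> f i = f i'"
  using staircase_row_le_iff[OF f g assms(3,4)] staircase_row_le_iff[OF f g assms(4,3)]
  by (auto simp: same_row_type_def)

lemma rows_le_staircase_iff:
  assumes f: "f \<in> surjections {..<n} {..<m}" and g: "g \<in> surjections {..<k} {..<m}"
  shows "rows_le d n k (staircase n k f g) \<longleftrightarrow> f \<in> bounded_surjections d {..<n} {..<m}"
proof -
  have "{i'. i' < n \<and> same_row_type k (staircase n k f g) i i'} = {a \<in> {..<n}. f a = f i}"
    if "i < n" for i
    using same_row_type_staircase_iff[OF f g that] by auto
  moreover have "fibres {..<n} {..<m} f = (\<lambda>i. {a \<in> {..<n}. f a = f i}) ` {..<n}"
    using f by (auto simp: fibres_def surjections_def)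
  ultimately show ?thesis using f by (auto simp: rows_le_def bounded_surjections_def)
qed

lemma staircase_of_switch_free:
  assumes A: "A \<in> zo_matrices n k" and switch_free: "switch_free n k A"
    and rows: "no_zero_row n k A" and cols: "no_zero_col n k A"
  obtains m f g where "f \<in> surjections {..<n} {..<m}" "g \<in> surjections {..<k} {..<m}"
    and "A = staircase n k f g"
proof -
  let ?row = "\<lambda>i. {j. j < k \<and> A i j}"
  define C where "C = ?row ` {..<n}"
  define f where "f = (\<lambda>i\<in>{..<n}. chain_rank C (?row i))"
  define g where "g = (\<lambda>j\<in>{..<k}. chain_entry C j)"
  have fin: "finite C" by (simp add: C_def)
  have chain: "chain\<^sub>\<subseteq> C"
    using switch_free unfolding chain_subset_def C_def switch_free_def by blast
  have "{} \<notin> C" using rows by (auto simp: C_def no_zero_row_def)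
  have "\<Union>C = {..<k}" using cols by (auto simp: C_def no_zero_col_def)
  have "f ` {..<n} = chain_rank C ` C" by (auto simp: f_def C_def)
  then have "f \<in> surjections {..<n} {..<card C}"
    using bij_betw_chain_rank[OF fin chain] by (auto simp: surjections_def f_def bij_betw_def)
  moreover have "g ` {..<k} = {..<card C}"
    using chain_entry_less_card[OF fin] chain_entry_surj[OF fin chain \<open>{} \<notin> C\<close>] \<open>\<Union>C = {..<k}\<close>
    by (auto simp: g_def image_iff)
  then have "g \<in> surjections {..<k} {..<card C}" by (auto simp: surjections_def g_def)
  moreover have "A = staircase n k f g"
  proof (intro ext)
    fix i j show "A i j = staircase n k f g i j"
    proof (cases "i < n \<and> j < k")
      case True
      then have "?row i \<in> C" by (simp add: C_def)
      with True show ?thesis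
        using mem_iff_chain_entry_le[OF fin chain, of "?row i" j] by (simp add: staircase_def f_def g_def)
    qed (use A in \<open>auto simp: zo_matrices_def staircase_def\<close>)
  qed
  ultimately show thesis by (rule that)
qed


section \<open>Counting lonesum matrices\<close>

lemma L_row_le_eq_staircases:
  "L_row_le d n k = (\<lambda>(f, g). staircase n k f g) `
     (\<Union>m\<le>min n k. bounded_surjections d {..<n} {..<m} \<times> surjections {..<k} {..<m})"
proof (intro equalityI subsetI)
  fix A assume "A \<in> L_row_le d n k"
  then have A: "A \<in> zo_matrices n k" "lonesum n k A" "no_zero_row n k A" "no_zero_col n k A"
    "rows_le d n k A" by (auto simp: L_row_le_def lonesum_def)
  then have "switch_free n k A" using lonesum_iff_switch_free by blast
  then obtain m f g where f: "f \<in> surjections {..<n} {..<m}" and g: "g \<in> surjections {..<k} {..<m}"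
    and A_eq: "A = staircase n k f g"
    using staircase_of_switch_free A(1,3,4) by blast
  have "m \<le> min n k" using surjections_lessThanD(3)[OF f] surjections_lessThanD(3)[OF g] by simp
  moreover have "f \<in> bounded_surjections d {..<n} {..<m}"
    using A(5) rows_le_staircase_iff[OF f g] A_eq by simp
  ultimately have "(f, g) \<in> (\<Union>m\<le>min n k. bounded_surjections d {..<n} {..<m} \<times> surjections {..<k} {..<m})"
    using g by blast
  then show "A \<in> (\<lambda>(f, g). staircase n k f g) `
     (\<Union>m\<le>min n k. bounded_surjections d {..<n} {..<m} \<times> surjections {..<k} {..<m})"
    by (rule rev_image_eqI) (simp add: A_eq)
next
  fix A assume "A \<in> (\<lambda>(f, g). staircase n k f g) `
     (\<Union>m\<le>min n k. bounded_surjections d {..<n} {..<m} \<times> surjections {..<k} {..<m})"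
  then obtain m f g where fd: "f \<in> bounded_surjections d {..<n} {..<m}"
    and g: "g \<in> surjections {..<k} {..<m}" and A_eq: "A = staircase n k f g" by auto
  then have f: "f \<in> surjections {..<n} {..<m}" by (simp add: bounded_surjections_def)
  show "A \<in> L_row_le d n k"
    unfolding L_row_le_def A_eq
    using lonesum_staircase no_zero_row_staircase[OF f g] no_zero_col_staircase[OF f g]
      rows_le_staircase_iff[OF f g] fd by simp
qed

lemma card_L_row_le:
  "card (L_row_le d n k) = (\<Sum>m\<le>min n k. fact m * Stirling_le d n m * (fact m * Stirling k m))"
proof -
  let ?U = "\<lambda>m :: nat. bounded_surjections d {..<n} {..<m} \<times> surjections {..<k} {..<m}"
  have inj: "inj_on (\<lambda>(f, g). staircase n k f g) (\<Union>m\<le>min n k. ?U m)"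
  proof (rule inj_onI)
    fix x y assume "x \<in> (\<Union>m\<le>min n k. ?U m)" "y \<in> (\<Union>m\<le>min n k. ?U m)"
      and eq: "(\<lambda>(f, g). staircase n k f g) x = (\<lambda>(f, g). staircase n k f g) y"
    then obtain f g f' g' m m' where "x = (f, g)" "y = (f', g')"
      "f \<in> surjections {..<n} {..<m}" "g \<in> surjections {..<k} {..<m}"
      "f' \<in> surjections {..<n} {..<m'}" "g' \<in> surjections {..<k} {..<m'}"
      by (auto simp: bounded_surjections_def)
    with eq show "x = y" using staircase_inj[of f n m g k f' m' g'] by simp
  qed
  have disjoint: "?U m \<inter> ?U m' = {}" if "m \<noteq> m'" for m m'
  proof (rule ccontr)
    assume "?U m \<inter> ?U m' \<noteq> {}"
    then obtain g where "g \<in> surjections {..<k} {..<m}" "g \<in> surjections {..<k} {..<m'}" by auto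
    then have "{..<m} = {..<m'}" by (simp add: surjections_def)
    with that show False by (metis card_lessThan)
  qed
  have "finite (?U m)" for m
    using finite_surjections[of "{..<n}" "{..<m}"] finite_surjections[of "{..<k}" "{..<m}"]
    by (simp add: bounded_surjections_def)
  have "card (L_row_le d n k) = card (\<Union>m\<le>min n k. ?U m)"
    unfolding L_row_le_eq_staircases by (rule card_image[OF inj])
  also have "\<dots> = (\<Sum>m\<le>min n k. card (?U m))"
    by (rule card_UN_disjoint) (simp_all add: \<open>\<And>m. finite (?U m)\<close> disjoint)
  also have "\<dots> = (\<Sum>m\<le>min n k. fact m * Stirling_le d n m * (fact m * Stirling k m))"
    by (simp add: card_cartesian_product card_bounded_surjections card_surjections
        bounded_partitions_def Stirling_le_def)
  finally show ?thesis .
qed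

lemma L_col_le_eq_transpose: "L_col_le d n k = (\<lambda>A i j. A j i) ` L_row_le d k n"
proof -
  have transpose: "B \<in> L_col_le d n k \<longleftrightarrow> (\<lambda>i j. B j i) \<in> L_row_le d k n" for B
  proof -
    have zo: "(\<lambda>i j. B j i) \<in> zo_matrices k n \<longleftrightarrow> B \<in> zo_matrices n k"
      by (auto simp: zo_matrices_def)
    moreover have "switch_free k n (\<lambda>i j. B j i) \<longleftrightarrow> switch_free n k B"
      unfolding switch_free_def by blast
    ultimately have "lonesum k n (\<lambda>i j. B j i) \<longleftrightarrow> lonesum n k B"
      using lonesum_iff_switch_free by (metis lonesum_def)
    then show ?thesis
      by (auto simp: L_col_le_def L_row_le_def no_zero_row_def no_zero_col_def rows_le_def
          cols_le_def same_row_type_def same_col_type_def)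
  qed
  show ?thesis
  proof (intro equalityI subsetI)
    fix B assume "B \<in> L_col_le d n k"
    then have "(\<lambda>i j. B j i) \<in> L_row_le d k n" using transpose by blast
    then show "B \<in> (\<lambda>A i j. A j i) ` L_row_le d k n" by (rule rev_image_eqI) simp
  next
    fix B assume "B \<in> (\<lambda>A i j. A j i) ` L_row_le d k n"
    then show "B \<in> L_col_le d n k" using transpose by auto
  qed
qed

theorem corollary1:
  fixes d n k :: nat
  assumes "d \<ge> 1"
  shows "card (L_row_le d n k) =
           (\<Sum>m\<le>min n k. fact m * Stirling_le d n m * (fact m * Stirling k m)) \<and>
         card (L_col_le d n k) =
           (\<Sum>m\<le>min n k. fact m * Stirling n m * (fact m * Stirling_le d k m))"
proof
  show "card (L_row_le d n k) =
           (\<Sum>m\<le>min n k. fact m * Stirling_le d n m * (fact m * Stirling k m))"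
    by (rule card_L_row_le)
  have "inj (\<lambda>(A :: nat \<Rightarrow> nat \<Rightarrow> bool) i j. A j i)" by (rule injI) (simp add: fun_eq_iff)
  then have "card (L_col_le d n k) = card (L_row_le d k n)"
    unfolding L_col_le_eq_transpose by (simp add: card_image inj_on_subset)
  then show "card (L_col_le d n k) =
           (\<Sum>m\<le>min n k. fact m * Stirling n m * (fact m * Stirling_le d k m))"
    by (simp add: card_L_row_le min.commute mult_ac)
qed

end
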